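(* Let $\mathcal{X}=\{1,\ldots,n\}$, let $p$ be a probability vector on $\mathcal{X}$ with all entries positive (the prior of $X$), let $p_{[1]}=\max_x p(x)$, and let $k<n$ be a positive integer. Then the maximum of the posterior min-entropy $H_\infty(X\mid Y)=-\log\big(\sum_{y:\,p(y)>0}p(y)\max_{x\in\mathcal{X}}p(x\mid y)\big)$ over all feasible channels is $-\log(\max(1/k,p_{[1]}))$. Consequently the minimum over feasible channels of the min-entropy leakage $H_\infty(X)-H_\infty(X\mid Y)$, where $H_\infty(X)=-\log p_{[1]}$, equals $0$ if $k\geq 1/p_{[1]}$ and equals $-\log(k\,p_{[1]})$ if $k<1/p_{[1]}$.
   Context: A channel is a discrete output set $\mathcal{Y}$ with conditional probabilities $p(y\mid x)\geq0$, $\sum_y p(y\mid x)=1$; $Y$ is its output when the input is $X\sim p$, with $p(y)=\sum_x p(x)p(y\mid x)$ and $p(x\mid y)=p(x)p(y\mid x)/p(y)$. The pre-image of $y$ is $\{x:p(y\mid x)>0\}$; the channel is feasible if every pre-image has at most $k$ elements. *)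

theory Defs
  imports "HOL-Analysis.Analysis"
begin

text \<open>Inputs: X = {1..n}. Outputs: a discrete (countable) output set, represented by nat.
  A channel is W :: nat => nat => real with W x y = p(y|x).\<close>

definition is_channel :: "nat \<Rightarrow> (nat \<Rightarrow> nat \<Rightarrow> real) \<Rightarrow> bool" where
  "is_channel n W \<longleftrightarrow> (\<forall>x\<in>{1..n}. (\<forall>y. W x y \<ge> 0) \<and> ((\<lambda>y. W x y) has_sum 1) UNIV)"

definition preimage :: "nat \<Rightarrow> (nat \<Rightarrow> nat \<Rightarrow> real) \<Rightarrow> nat \<Rightarrow> nat set" where
  "preimage n W y = {x\<in>{1..n}. W x y > 0}"

definition feasible_channels :: "nat \<Rightarrow> nat \<Rightarrow> (nat \<Rightarrow> nat \<Rightarrow> real) set" where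
  "feasible_channels n k = {W. is_channel n W \<and> (\<forall>y. card (preimage n W y) \<le> k)}"

definition out_prob :: "nat \<Rightarrow> (nat \<Rightarrow> real) \<Rightarrow> (nat \<Rightarrow> nat \<Rightarrow> real) \<Rightarrow> nat \<Rightarrow> real" where
  "out_prob n p W y = (\<Sum>x\<in>{1..n}. p x * W x y)"

definition posterior :: "nat \<Rightarrow> (nat \<Rightarrow> real) \<Rightarrow> (nat \<Rightarrow> nat \<Rightarrow> real) \<Rightarrow> nat \<Rightarrow> nat \<Rightarrow> real" where
  "posterior n p W x y = p x * W x y / out_prob n p W y"

definition min_entropy :: "nat \<Rightarrow> (nat \<Rightarrow> real) \<Rightarrow> real" where
  "min_entropy n p = - log 2 (Max (p ` {1..n}))"

definition cond_min_entropy :: "nat \<Rightarrow> (nat \<Rightarrow> real) \<Rightarrow> (nat \<Rightarrow> nat \<Rightarrow> real) \<Rightarrow> real" where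
  "cond_min_entropy n p W =
     - log 2 (infsum (\<lambda>y. out_prob n p W y * Max ((\<lambda>x. posterior n p W x y) ` {1..n}))
                     {y. out_prob n p W y > 0})"

definition min_entropy_leakage :: "nat \<Rightarrow> (nat \<Rightarrow> real) \<Rightarrow> (nat \<Rightarrow> nat \<Rightarrow> real) \<Rightarrow> real" where
  "min_entropy_leakage n p W = min_entropy n p - cond_min_entropy n p W"

end

theory Submission
  imports Defs
begin

text \<open>
  The posterior vulnerability \<open>V = \<Sum>\<^sub>y max\<^sub>x p(x) W(x,y)\<close> of any channel is
  at least \<open>p\<^sub>[\<^sub>1\<^sub>]\<close>, by looking only at the row of a most likely input, and at least
  \<open>1/k\<close>, because every output column has at most \<open>k\<close> nonzero entries, so its maximum
  is at least a \<open>k\<close>-th of its mass \<open>p(y)\<close>. Conversely, with \<open>C = max (1/k) p\<^sub>[\<^sub>1\<^sub>]\<close>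
  the prior satisfies \<open>p \<le> C\<close> and \<open>\<Sum> p \<le> k C\<close>, and such a vector splits into columns
  supported on at most \<open>k\<close> inputs whose maxima add up to at most \<open>C\<close>. The split is built
  by water filling: lower \<open>k\<close> entries, including all entries at the ceiling \<open>C\<close>,
  together with the ceiling, until an entry empties or another entry hits the ceiling.
  Taking these columns as outputs gives a feasible channel with \<open>V = C\<close>, and
  \<open>H\<^sub>\<infinity>(X|Y) = - log V\<close>.
\<close>

lemma has_sum_sum:
  fixes f :: "'i \<Rightarrow> 'a \<Rightarrow> 'b::topological_comm_monoid_add"
  assumes "finite I" "\<And>i. i \<in> I \<Longrightarrow> (f i has_sum s i) A"
  shows "((\<lambda>y. \<Sum>i\<in>I. f i y) has_sum (\<Sum>i\<in>I. s i)) A"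
  using assms by (induction I rule: finite_induct) (auto intro: has_sum_add)

definition column_decomposition ::
    "'a set \<Rightarrow> nat \<Rightarrow> ('a \<Rightarrow> real) \<Rightarrow> real \<Rightarrow> (real \<times> ('a \<Rightarrow> real)) list \<Rightarrow> bool" where
  "column_decomposition S k a C cs \<longleftrightarrow>
     (\<forall>(h, c)\<in>set cs. (\<forall>x\<in>S. 0 \<le> c x \<and> c x \<le> h) \<and> card {x\<in>S. 0 < c x} \<le> k) \<and>
     (\<forall>x\<in>S. (\<Sum>(h, c)\<leftarrow>cs. c x) = a x) \<and> (\<Sum>(h, c)\<leftarrow>cs. h) \<le> C"

lemma card_level_set_le:
  fixes a :: "'a \<Rightarrow> real"
  assumes "finite S" "\<forall>x\<in>S. 0 \<le> a x" "sum a S \<le> real k * C" "0 < C"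
  shows "card {x\<in>S. a x = C} \<le> k"
proof -
  have "real (card {x\<in>S. a x = C}) * C = sum a {x\<in>S. a x = C}" by simp
  also have "\<dots> \<le> sum a S" using assms(1,2) by (intro sum_mono2) auto
  finally have "real (card {x\<in>S. a x = C}) * C \<le> real k * C" using assms(3) by linarith
  then show ?thesis using assms(4) by simp
qed

text \<open>The level \<open>t\<close> is the largest amount by which the entries on \<open>K\<close> and the ceiling \<open>C\<close> can be
  lowered together: either an entry of \<open>K\<close> drops to \<open>0\<close> or a positive entry outside \<open>K\<close>
  reaches the new ceiling.\<close>

lemma water_filling_level:
  fixes a :: "'a \<Rightarrow> real"
  assumes S: "finite S" and bounds: "\<forall>x\<in>S. 0 \<le> a x \<and> a x \<le> C"
    and K: "{x\<in>S. a x = C} \<subseteq> K" "K \<subseteq> {x\<in>S. 0 < a x}" "K \<noteq> {}"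
  obtains t where "0 < t" and "\<forall>x\<in>K. t \<le> a x" and "\<forall>x\<in>S - K. t \<le> C - a x"
    and "(\<exists>x\<in>K. a x = t) \<or> (\<exists>z\<in>S - K. 0 < a z \<and> a z = C - t)"
proof
  define t where "t = Min (a ` K \<union> (\<lambda>x. C - a x) ` (S - K))"
  have "finite K" using S K(2) by (auto intro: rev_finite_subset)
  then have fin: "finite (a ` K \<union> (\<lambda>x. C - a x) ` (S - K))" using S by auto
  show t_le: "\<forall>x\<in>K. t \<le> a x" and t_le': "\<forall>x\<in>S - K. t \<le> C - a x"
    using fin by (auto simp: t_def)
  have below: "a x < C" if "x \<in> S - K" for x using that bounds K(1) by force
  have t_in: "t \<in> a ` K \<union> (\<lambda>x. C - a x) ` (S - K)"
    unfolding t_def using fin K(3) by (intro Min_in) auto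
  show "0 < t" using t_in K(2) below by force
  show "(\<exists>x\<in>K. a x = t) \<or> (\<exists>z\<in>S - K. 0 < a z \<and> a z = C - t)"
  proof (rule disjCI)
    assume none: "\<not> (\<exists>z\<in>S - K. 0 < a z \<and> a z = C - t)"
    from t_in show "\<exists>x\<in>K. a x = t"
    proof
      assume "t \<in> (\<lambda>x. C - a x) ` (S - K)"
      then obtain z where "z \<in> S - K" "a z = C - t" by auto
      then have "t = C" using none bounds by force
      obtain x where "x \<in> K" using K(3) by blast
      then show ?thesis using t_le bounds K(2) \<open>t = C\<close> by force
    qed auto
  qed
qed

lemma water_filling_step:
  fixes a :: "'a \<Rightarrow> real"
  assumes S: "finite S" and bounds: "\<forall>x\<in>S. 0 \<le> a x \<and> a x \<le> C" and K: "K \<subseteq> S"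
    and t: "0 < t" "\<forall>x\<in>K. t \<le> a x" "\<forall>x\<in>S - K. t \<le> C - a x"
    and attained: "(\<exists>x\<in>K. a x = t) \<or> (\<exists>z\<in>S - K. 0 < a z \<and> a z = C - t)"
  defines "a' \<equiv> \<lambda>x. if x \<in> K then a x - t else a x"
  shows "\<forall>x\<in>S. 0 \<le> a' x \<and> a' x \<le> C - t"
    and "sum a' S = sum a S - real (card K) * t"
    and "card {x\<in>S. 0 < a' x} + card {x\<in>S. 0 < a' x \<and> a' x < C - t}
         < card {x\<in>S. 0 < a x} + card {x\<in>S. 0 < a x \<and> a x < C}"
proof -
  show "\<forall>x\<in>S. 0 \<le> a' x \<and> a' x \<le> C - t"
  proof
    fix x assume "x \<in> S"
    then show "0 \<le> a' x \<and> a' x \<le> C - t"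
      using t(2) t(3)[rule_format, of x] bounds by (cases "x \<in> K") (auto simp: a'_def)
  qed
  have "sum a' S = sum a S - (\<Sum>x\<in>S. if x \<in> K then t else 0)"
    by (simp add: a'_def sum_subtractf[symmetric] if_distrib cong: if_cong)
  also have "(\<Sum>x\<in>S. if x \<in> K then t else 0) = real (card K) * t"
    using S K by (simp add: sum.If_cases Int_absorb1)
  finally show "sum a' S = sum a S - real (card K) * t" .
  let ?P = "{x\<in>S. 0 < a x}" and ?N = "{x\<in>S. 0 < a x \<and> a x < C}"
  let ?P' = "{x\<in>S. 0 < a' x}" and ?N' = "{x\<in>S. 0 < a' x \<and> a' x < C - t}"
  have fins: "finite ?P" "finite ?N" using S by auto
  have P'P: "?P' \<subseteq> ?P" and N'N: "?N' \<subseteq> ?N"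
    using t(1) by (auto simp: a'_def split: if_splits)
  from attained show "card ?P' + card ?N' < card ?P + card ?N"
  proof
    assume "\<exists>x\<in>K. a x = t"
    then have "?P - ?P' \<noteq> {}" using K t(1) by (auto simp: a'_def)
    then have "card ?P' < card ?P" using fins(1) P'P by (intro psubset_card_mono) auto
    moreover have "card ?N' \<le> card ?N" using fins(2) N'N by (rule card_mono)
    ultimately show ?thesis by linarith
  next
    assume "\<exists>z\<in>S - K. 0 < a z \<and> a z = C - t"
    then have "?N - ?N' \<noteq> {}" using t(1) by (auto simp: a'_def)
    then have "card ?N' < card ?N" using fins(2) N'N by (intro psubset_card_mono) auto
    moreover have "card ?P' \<le> card ?P" using fins(1) P'P by (rule card_mono)
    ultimately show ?thesis by linarith
  qed
qed

lemma column_decomposition_exists: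
  fixes a :: "'a \<Rightarrow> real"
  assumes "finite S" "0 < k" "\<forall>x\<in>S. 0 \<le> a x \<and> a x \<le> C" "sum a S \<le> real k * C"
  shows "\<exists>cs. column_decomposition S k a C cs"
  using assms(3,4)
proof (induction "card {x\<in>S. 0 < a x} + card {x\<in>S. 0 < a x \<and> a x < C}"
    arbitrary: a C rule: less_induct)
  case (less a C)
  let ?P = "{x\<in>S. 0 < a x}"
  show ?case
  proof (cases "card ?P \<le> k")
    case True
    then have "column_decomposition S k a C [(C, a)]"
      using less.prems(1) by (simp add: column_decomposition_def)
    then show ?thesis by blast
  next
    case False
    then have "?P \<noteq> {}" by (metis card.empty zero_le)
    then obtain x1 where "x1 \<in> ?P" by blast
    then have "0 < C" using less.prems(1) by force
    then have "card {x\<in>S. a x = C} \<le> k"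
      using assms(1) less.prems by (intro card_level_set_le) auto
    moreover have "{x\<in>S. a x = C} \<subseteq> ?P" using \<open>0 < C\<close> by auto
    ultimately obtain K where K: "{x\<in>S. a x = C} \<subseteq> K" "K \<subseteq> ?P" "card K = k"
      using exists_subset_between[of "{x\<in>S. a x = C}" k ?P] False assms(1) by auto
    have "K \<noteq> {}" using K(3) assms(2) by auto
    with assms(1) less.prems(1) K(1,2) obtain t
      where t: "0 < t" "\<forall>x\<in>K. t \<le> a x" "\<forall>x\<in>S - K. t \<le> C - a x"
        "(\<exists>x\<in>K. a x = t) \<or> (\<exists>z\<in>S - K. 0 < a z \<and> a z = C - t)"
      by (rule water_filling_level)
    define a' where "a' = (\<lambda>x. if x \<in> K then a x - t else a x)"
    have "K \<subseteq> S" using K(2) by auto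
    note step = water_filling_step[OF assms(1) less.prems(1) this t, folded a'_def]
    have "sum a' S \<le> real k * (C - t)"
      using step(2) K(3) less.prems(2) by (simp add: algebra_simps)
    then obtain cs where cs: "column_decomposition S k a' (C - t) cs"
      using less.hyps[OF step(3) step(1)] unfolding a'_def by blast
    define c where "c = (\<lambda>x. if x \<in> K then t else 0)"
    have "{x\<in>S. 0 < c x} = K" using K(2) t(1) by (auto simp: c_def)
    then have "column_decomposition S k a C ((t, c) # cs)"
      using cs t(1) K(3) by (auto simp: column_decomposition_def c_def a'_def)
    then show ?thesis by blast
  qed
qed

definition max_joint_prob ::
    "nat \<Rightarrow> (nat \<Rightarrow> real) \<Rightarrow> (nat \<Rightarrow> nat \<Rightarrow> real) \<Rightarrow> nat \<Rightarrow> real" where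
  "max_joint_prob n p W y = Max ((\<lambda>x. p x * W x y) ` {1..n})"

definition posterior_vulnerability ::
    "nat \<Rightarrow> (nat \<Rightarrow> real) \<Rightarrow> (nat \<Rightarrow> nat \<Rightarrow> real) \<Rightarrow> real" where
  "posterior_vulnerability n p W = (\<Sum>\<^sub>\<infinity>y. max_joint_prob n p W y)"

lemma out_prob_has_sum:
  assumes "is_channel n W" "(\<Sum>x\<in>{1..n}. p x) = 1"
  shows "(out_prob n p W has_sum 1) UNIV"
proof -
  have "((\<lambda>y. \<Sum>x\<in>{1..n}. p x * W x y) has_sum (\<Sum>x\<in>{1..n}. p x * 1)) UNIV"
    using assms(1) by (intro has_sum_sum has_sum_cmult_right) (auto simp: is_channel_def)
  then show ?thesis using assms(2) by (simp add: out_prob_def[abs_def])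
qed

lemma joint_prob_le_max_joint_prob:
  "x \<in> {1..n} \<Longrightarrow> p x * W x y \<le> max_joint_prob n p W y"
  unfolding max_joint_prob_def by (rule Max_ge) auto

lemma joint_prob_nonneg:
  assumes "is_channel n W" "\<forall>x\<in>{1..n}. 0 \<le> p x" "x \<in> {1..n}"
  shows "0 \<le> p x * W x y"
  using assms by (simp add: is_channel_def)

lemma out_prob_le_card_preimage:
  assumes "is_channel n W"
  shows "out_prob n p W y \<le> real (card (preimage n W y)) * max_joint_prob n p W y"
proof -
  have "out_prob n p W y = (\<Sum>x\<in>preimage n W y. p x * W x y)"
    unfolding out_prob_def preimage_def using assms
    by (intro sum.mono_neutral_right) (auto simp: is_channel_def order.order_iff_strict)
  also have "\<dots> \<le> (\<Sum>x\<in>preimage n W y. max_joint_prob n p W y)"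
    by (intro sum_mono joint_prob_le_max_joint_prob) (auto simp: preimage_def)
  finally show ?thesis by simp
qed

context
  fixes n :: nat and p :: "nat \<Rightarrow> real" and W :: "nat \<Rightarrow> nat \<Rightarrow> real"
  assumes channel: "is_channel n W" and prior_nonneg: "\<forall>x\<in>{1..n}. 0 \<le> p x"
    and n_pos: "1 \<le> n"
begin

lemma max_joint_prob_nonneg: "0 \<le> max_joint_prob n p W y"
  using joint_prob_nonneg[OF channel prior_nonneg, of 1 y]
    joint_prob_le_max_joint_prob[of 1 n p W y] n_pos by simp

lemma max_joint_prob_le_out_prob: "max_joint_prob n p W y \<le> out_prob n p W y"
  unfolding max_joint_prob_def out_prob_def using n_pos
  by (subst Max_le_iff) (auto intro!: member_le_sum joint_prob_nonneg[OF channel prior_nonneg])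

lemma max_joint_prob_summable:
  assumes "(\<Sum>x\<in>{1..n}. p x) = 1"
  shows "max_joint_prob n p W summable_on UNIV"
  using has_sum_imp_summable[OF out_prob_has_sum[OF channel assms]]
    max_joint_prob_le_out_prob max_joint_prob_nonneg
  by (rule summable_on_comparison_test)

lemma cond_min_entropy_eq: "cond_min_entropy n p W = - log 2 (posterior_vulnerability n p W)"
proof -
  have "out_prob n p W y * Max ((\<lambda>x. posterior n p W x y) ` {1..n}) = max_joint_prob n p W y"
    if "0 < out_prob n p W y" for y
  proof -
    have "Max ((\<lambda>x. posterior n p W x y) ` {1..n})
        = Max ((\<lambda>u. u / out_prob n p W y) ` (\<lambda>x. p x * W x y) ` {1..n})"
      by (simp add: posterior_def image_image)
    also have "\<dots> = max_joint_prob n p W y / out_prob n p W y"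
      unfolding max_joint_prob_def using that n_pos
      by (subst mono_Max_commute[symmetric]) (auto intro!: monoI divide_right_mono)
    finally show ?thesis using that by simp
  qed
  then have "(\<Sum>\<^sub>\<infinity>y\<in>{y. 0 < out_prob n p W y}.
        out_prob n p W y * Max ((\<lambda>x. posterior n p W x y) ` {1..n}))
      = (\<Sum>\<^sub>\<infinity>y\<in>{y. 0 < out_prob n p W y}. max_joint_prob n p W y)"
    by (intro infsum_cong) auto
  also have "\<dots> = (\<Sum>\<^sub>\<infinity>y. max_joint_prob n p W y)"
    using max_joint_prob_le_out_prob max_joint_prob_nonneg
    by (intro infsum_cong_neutral) (auto simp: not_less intro: order.antisym order.trans)
  finally show ?thesis by (simp add: cond_min_entropy_def posterior_vulnerability_def)
qed

lemma Max_prior_le_posterior_vulnerability: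
  assumes "(\<Sum>x\<in>{1..n}. p x) = 1"
  shows "Max (p ` {1..n}) \<le> posterior_vulnerability n p W"
proof -
  obtain x0 where x0: "x0 \<in> {1..n}" "p x0 = Max (p ` {1..n})"
    using n_pos Max_in[of "p ` {1..n}"] by fastforce
  have "((\<lambda>y. p x0 * W x0 y) has_sum p x0 * 1) UNIV"
    using channel x0(1) by (intro has_sum_cmult_right) (simp add: is_channel_def)
  with has_sum_infsum[OF max_joint_prob_summable[OF assms]]
  have "p x0 \<le> posterior_vulnerability n p W"
    unfolding posterior_vulnerability_def
    by (auto intro: has_sum_mono joint_prob_le_max_joint_prob[OF x0(1)])
  then show ?thesis using x0(2) by simp
qed

lemma inverse_le_posterior_vulnerability:
  assumes "(\<Sum>x\<in>{1..n}. p x) = 1" and "\<forall>y. card (preimage n W y) \<le> k" and "0 < k"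
  shows "1 / real k \<le> posterior_vulnerability n p W"
proof -
  have "out_prob n p W y / real k \<le> max_joint_prob n p W y" for y
  proof -
    have "out_prob n p W y \<le> real (card (preimage n W y)) * max_joint_prob n p W y"
      by (rule out_prob_le_card_preimage[OF channel])
    also have "\<dots> \<le> real k * max_joint_prob n p W y"
      using assms(2) max_joint_prob_nonneg by (intro mult_right_mono) auto
    finally show ?thesis using assms(3) by (simp add: field_simps)
  qed
  moreover have "((\<lambda>y. out_prob n p W y / real k) has_sum 1 / real k) UNIV"
    using has_sum_cmult_left[OF out_prob_has_sum[OF channel assms(1)], of "1 / real k"] by simp
  ultimately show ?thesis
    using has_sum_infsum[OF max_joint_prob_summable[OF assms(1)]]
    unfolding posterior_vulnerability_def by (auto intro: has_sum_mono)
qed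

end

lemma column_decomposition_nth:
  assumes "column_decomposition S k a C cs" and "y < length cs"
  shows "\<forall>x\<in>S. 0 \<le> snd (cs ! y) x \<and> snd (cs ! y) x \<le> fst (cs ! y)"
    and "card {x\<in>S. 0 < snd (cs ! y) x} \<le> k"
  using assms nth_mem[OF assms(2)] by (auto simp: column_decomposition_def case_prod_unfold)

lemma column_decomposition_sums:
  assumes "column_decomposition S k a C cs"
  shows "\<forall>x\<in>S. (\<Sum>y<length cs. snd (cs ! y) x) = a x"
    and "(\<Sum>y<length cs. fst (cs ! y)) \<le> C"
  using assms
  by (auto simp: column_decomposition_def case_prod_unfold sum_list_sum_nth atLeast0LessThan)

definition decomposition_channel ::
    "(nat \<Rightarrow> real) \<Rightarrow> (real \<times> (nat \<Rightarrow> real)) list \<Rightarrow> nat \<Rightarrow> nat \<Rightarrow> real" where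
  "decomposition_channel p cs x y = (if y < length cs then snd (cs ! y) x / p x else 0)"

context
  fixes n k :: nat and p :: "nat \<Rightarrow> real" and C :: real
    and cs :: "(real \<times> (nat \<Rightarrow> real)) list"
  assumes prior_pos: "\<forall>x\<in>{1..n}. 0 < p x"
    and decomposition: "column_decomposition {1..n} k p C cs"
begin

lemma decomposition_channel_feasible: "decomposition_channel p cs \<in> feasible_channels n k"
proof -
  note column = column_decomposition_nth[OF decomposition]
    and sums = column_decomposition_sums[OF decomposition]
  have "is_channel n (decomposition_channel p cs)" unfolding is_channel_def
  proof (intro ballI conjI allI)
    fix x y assume x: "x \<in> {1..n}"
    show "0 \<le> decomposition_channel p cs x y"
      using column(1) prior_pos x by (auto simp: decomposition_channel_def less_imp_le)
    have "(\<Sum>y<length cs. decomposition_channel p cs x y)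
        = (\<Sum>y<length cs. snd (cs ! y) x) / p x"
      by (simp add: decomposition_channel_def sum_divide_distrib)
    also have "\<dots> = 1" using sums(1) prior_pos x by force
    finally show "((\<lambda>y. decomposition_channel p cs x y) has_sum 1) UNIV"
      by (intro has_sum_finite_neutralI[of "{..<length cs}"]) (auto simp: decomposition_channel_def)
  qed
  moreover have "card (preimage n (decomposition_channel p cs) y) \<le> k" for y
  proof (cases "y < length cs")
    case True
    then have "preimage n (decomposition_channel p cs) y = {x\<in>{1..n}. 0 < snd (cs ! y) x}"
      using prior_pos by (force simp: preimage_def decomposition_channel_def zero_less_divide_iff)
    then show ?thesis using column(2)[OF True] by simp
  qed (simp add: preimage_def decomposition_channel_def)
  ultimately show ?thesis by (simp add: feasible_channels_def)
qed

lemma posterior_vulnerability_decomposition_channel_le: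
  assumes "1 \<le> n"
  shows "posterior_vulnerability n p (decomposition_channel p cs) \<le> C"
proof -
  let ?g = "max_joint_prob n p (decomposition_channel p cs)"
  have joint: "p x * decomposition_channel p cs x y = (if y < length cs then snd (cs ! y) x else 0)"
    if "x \<in> {1..n}" for x y
    using prior_pos that by (force simp: decomposition_channel_def)
  have "?g y = 0" if "y \<notin> {..<length cs}" for y
  proof -
    have "(\<lambda>x. p x * decomposition_channel p cs x y) ` {1..n} = {0}"
      using that assms by (auto simp: decomposition_channel_def)
    then show ?thesis by (simp add: max_joint_prob_def)
  qed
  then have "posterior_vulnerability n p (decomposition_channel p cs) = (\<Sum>y<length cs. ?g y)"
    unfolding posterior_vulnerability_def by (intro infsumI has_sum_finite_neutralI) auto
  also have "\<dots> \<le> (\<Sum>y<length cs. fst (cs ! y))"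
    using assms column_decomposition_nth(1)[OF decomposition]
    by (intro sum_mono) (auto simp: max_joint_prob_def joint Max_le_iff)
  also have "\<dots> \<le> C" by (rule column_decomposition_sums(2)[OF decomposition])
  finally show ?thesis .
qed

end

lemma posterior_vulnerability_optimum:
  assumes pos: "\<forall>x\<in>{1..n}. 0 < p x" and prob: "(\<Sum>x\<in>{1..n}. p x) = 1"
    and "0 < k" and "1 \<le> n"
  shows "\<exists>W\<in>feasible_channels n k.
           posterior_vulnerability n p W = max (1 / real k) (Max (p ` {1..n}))"
    and "\<forall>W\<in>feasible_channels n k.
           max (1 / real k) (Max (p ` {1..n})) \<le> posterior_vulnerability n p W"
proof -
  let ?C = "max (1 / real k) (Max (p ` {1..n}))"
  have nonneg: "\<forall>x\<in>{1..n}. 0 \<le> p x" using pos by (simp add: less_imp_le)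
  show lower: "\<forall>W\<in>feasible_channels n k. ?C \<le> posterior_vulnerability n p W"
    using Max_prior_le_posterior_vulnerability[OF _ nonneg \<open>1 \<le> n\<close> prob]
      inverse_le_posterior_vulnerability[OF _ nonneg \<open>1 \<le> n\<close> prob _ \<open>0 < k\<close>]
    by (simp add: feasible_channels_def)
  have "\<forall>x\<in>{1..n}. 0 \<le> p x \<and> p x \<le> ?C" using nonneg by (simp add: le_max_iff_disj)
  moreover have "sum p {1..n} \<le> real k * ?C"
  proof -
    have "real k * (1 / real k) \<le> real k * ?C" by (intro mult_left_mono) auto
    then show ?thesis using prob \<open>0 < k\<close> by simp
  qed
  ultimately obtain cs where "column_decomposition {1..n} k p ?C cs"
    using column_decomposition_exists[of "{1..n}" k] \<open>0 < k\<close> by blast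
  then have "decomposition_channel p cs \<in> feasible_channels n k"
    and "posterior_vulnerability n p (decomposition_channel p cs) \<le> ?C"
    using decomposition_channel_feasible posterior_vulnerability_decomposition_channel_le
      pos \<open>1 \<le> n\<close> by blast+
  with lower show "\<exists>W\<in>feasible_channels n k. posterior_vulnerability n p W = ?C"
    by (meson order.antisym)
qed

lemma log_max_inverse_minus_log:
  assumes "0 < M" and "0 < k"
  shows "log 2 (max (1 / real k) M) - log 2 M
         = (if real k \<ge> 1 / M then 0 else - log 2 (real k * M))"
proof (cases "real k \<ge> 1 / M")
  case True
  then have "1 / real k \<le> M" using assms by (simp add: field_simps)
  then show ?thesis using True by simp
next
  case False
  then have "M < 1 / real k" using assms by (simp add: field_simps)
  then show ?thesis using False assms by (simp add: log_mult log_divide)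
qed

theorem corollary1:
  fixes n k :: nat and p :: "nat \<Rightarrow> real"
  assumes pos: "\<forall>x\<in>{1..n}. p x > 0"
    and prob: "(\<Sum>x\<in>{1..n}. p x) = 1"
    and k_pos: "0 < k" and k_lt: "k < n"
  shows "(\<exists>W\<in>feasible_channels n k.
             cond_min_entropy n p W = - log 2 (max (1 / real k) (Max (p ` {1..n}))))
       \<and> (\<forall>W\<in>feasible_channels n k.
             cond_min_entropy n p W \<le> - log 2 (max (1 / real k) (Max (p ` {1..n}))))
       \<and> (\<exists>W\<in>feasible_channels n k.
             min_entropy_leakage n p W = (if real k \<ge> 1 / Max (p ` {1..n}) then 0
                                         else - log 2 (real k * Max (p ` {1..n}))))
       \<and> (\<forall>W\<in>feasible_channels n k.
             min_entropy_leakage n p W \<ge> (if real k \<ge> 1 / Max (p ` {1..n}) then 0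
                                         else - log 2 (real k * Max (p ` {1..n}))))"
proof -
  let ?M = "Max (p ` {1..n})"
  let ?C = "max (1 / real k) ?M"
  have "1 \<le> n" using k_pos k_lt by simp
  then have "0 < ?M" using pos by (auto simp: Max_gr_iff)
  have cond: "cond_min_entropy n p W = - log 2 (posterior_vulnerability n p W)"
    if "W \<in> feasible_channels n k" for W
    using that pos \<open>1 \<le> n\<close>
    by (intro cond_min_entropy_eq) (auto simp: feasible_channels_def less_imp_le)
  then have leakage:
      "min_entropy_leakage n p W = log 2 (posterior_vulnerability n p W) - log 2 ?M"
    if "W \<in> feasible_channels n k" for W
    using that by (simp add: min_entropy_leakage_def min_entropy_def)
  note opt = posterior_vulnerability_optimum[OF pos prob k_pos \<open>1 \<le> n\<close>]
  have "0 < ?C" using \<open>0 < ?M\<close> by simp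
  then have log_lower: "log 2 ?C \<le> log 2 (posterior_vulnerability n p W)"
    if "W \<in> feasible_channels n k" for W
    using opt(2) that by (subst log_le_cancel_iff) auto
  obtain W0 where W0: "W0 \<in> feasible_channels n k" "posterior_vulnerability n p W0 = ?C"
    using opt(1) by blast
  note gap = log_max_inverse_minus_log[OF \<open>0 < ?M\<close> k_pos]
  show ?thesis
  proof (intro conjI)
    show "\<exists>W\<in>feasible_channels n k. cond_min_entropy n p W = - log 2 ?C"
      using W0 by (intro bexI[OF _ W0(1)]) (simp add: cond)
    show "\<forall>W\<in>feasible_channels n k. cond_min_entropy n p W \<le> - log 2 ?C"
      using log_lower cond by simp
    show "\<exists>W\<in>feasible_channels n k. min_entropy_leakage n p W
        = (if real k \<ge> 1 / ?M then 0 else - log 2 (real k * ?M))"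
      using W0 gap by (intro bexI[OF _ W0(1)]) (simp add: leakage)
    show "\<forall>W\<in>feasible_channels n k. min_entropy_leakage n p W
        \<ge> (if real k \<ge> 1 / ?M then 0 else - log 2 (real k * ?M))"
    proof
      fix W assume W: "W \<in> feasible_channels n k"
      show "min_entropy_leakage n p W \<ge> (if real k \<ge> 1 / ?M then 0 else - log 2 (real k * ?M))"
        using log_lower[OF W] leakage[OF W] gap by linarith
    qed
  qed
qed

end
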